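(* Assume each $f_i$ is convex with $L$-Lipschitz gradient (no strong convexity assumed), and let $x^*$ be a minimiser of $F=f+h$. Run SAGA with step size $\gamma=\frac{1}{3L}$ starting from $x^0$ with $\phi_i^0=x^0$ for all $i$, and let $\bar{x}^{k}=\frac{1}{k}\sum_{t=1}^{k}x^{t}$ for $k\ge1$. Then \[ \mathbb{E}\left[F(\bar{x}^{k})\right]-F(x^{*})\leq\frac{4n}{k}\left[\frac{2L}{n}\Vert x^{0}-x^{*}\Vert^{2}+f(x^{0})-\langle f'(x^{*}),x^{0}-x^{*}\rangle -f(x^{*})\right], \] where the expectation is over all random index choices up to step $k$.
   Context: Setting: $f(x)=\frac1n\sum_{i=1}^n f_i(x)$ with each $f_i\colon\mathbb{R}^d\to\mathbb{R}$ convex and differentiable with $L$-Lipschitz gradient $f_i'$; $h\colon\mathbb{R}^d\to\mathbb{R}\cup\{+\infty\}$ is proper, closed, convex; $F=f+h$. The proximal operator is $\mathrm{prox}^h_\gamma(y)=\operatorname{argmin}_{x}\{h(x)+\frac{1}{2\gamma}\Vert x-y\Vert^2\}$. SAGA algorithm with step size $\gamma>0$: start from $x^0\in\mathbb{R}^d$ and $\phi_i^0=x^0$ for all $i$. At iteration $k+1$, given $x^k$ and $\phi_1^k,\dots,\phi_n^k$: pick $j$ uniformly at random from $\{1,\dots,n\}$ (independently of the past); set $\phi_j^{k+1}=x^k$ and $\phi_i^{k+1}=\phi_i^k$ for $i\neq j$; set $w^{k+1}=x^k-\gamma\big[f_j'(\phi_j^{k+1})-f_j'(\phi_j^k)+\frac1n\sum_{i=1}^n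 f_i'(\phi_i^k)\big]$ and $x^{k+1}=\mathrm{prox}^h_\gamma(w^{k+1})$. *)

theory Defs
  imports "HOL-Analysis.Analysis" "HOL-Library.Extended_Real"
begin

definition epigraph :: "('a \<Rightarrow> ereal) \<Rightarrow> ('a \<times> real) set" where
  "epigraph h = {(x, t). h x \<le> ereal t}"

definition proper_fun :: "('a \<Rightarrow> ereal) \<Rightarrow> bool" where
  "proper_fun h \<longleftrightarrow> (\<forall>x. h x \<noteq> -\<infinity>) \<and> (\<exists>x. h x \<noteq> \<infinity>)"

definition closed_fun :: "('a::topological_space \<Rightarrow> ereal) \<Rightarrow> bool" where
  "closed_fun h \<longleftrightarrow> closed (epigraph h)"

definition convex_fun :: "('a::real_vector \<Rightarrow> ereal) \<Rightarrow> bool" where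
  "convex_fun h \<longleftrightarrow> convex (epigraph h)"

definition prox :: "('a::real_normed_vector \<Rightarrow> ereal) \<Rightarrow> real \<Rightarrow> 'a \<Rightarrow> 'a" where
  "prox h \<gamma> y = (THE x. \<forall>z. h x + ereal (norm (x - y)^2 / (2 * \<gamma>))
                            \<le> h z + ereal (norm (z - y)^2 / (2 * \<gamma>)))"

text \<open>One SAGA step with chosen index j, acting on the state (x^k, phi^k).
  f' i is the gradient of f_i, components indexed by i < n.\<close>

definition saga_step ::
  "(nat \<Rightarrow> 'a \<Rightarrow> 'a) \<Rightarrow> nat \<Rightarrow> real \<Rightarrow> ('a::real_normed_vector \<Rightarrow> ereal) \<Rightarrow> nat
    \<Rightarrow> 'a \<times> (nat \<Rightarrow> 'a) \<Rightarrow> 'a \<times> (nat \<Rightarrow> 'a)" where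
  "saga_step f' n \<gamma> h j s =
     (let x = fst s; \<phi> = snd s;
          w = x - \<gamma> *\<^sub>R (f' j x - f' j (\<phi> j) + (1 / real n) *\<^sub>R (\<Sum>i<n. f' i (\<phi> i)))
      in (prox h \<gamma> w, \<phi>(j := x)))"

definition saga_run ::
  "(nat \<Rightarrow> 'a \<Rightarrow> 'a) \<Rightarrow> nat \<Rightarrow> real \<Rightarrow> ('a::real_normed_vector \<Rightarrow> ereal) \<Rightarrow> 'a
    \<Rightarrow> nat list \<Rightarrow> 'a \<times> (nat \<Rightarrow> 'a)" where
  "saga_run f' n \<gamma> h x0 js = foldl (\<lambda>s j. saga_step f' n \<gamma> h j s) (x0, \<lambda>_. x0) js"

definition saga_iter ::
  "(nat \<Rightarrow> 'a \<Rightarrow> 'a) \<Rightarrow> nat \<Rightarrow> real \<Rightarrow> ('a::real_normed_vector \<Rightarrow> ereal) \<Rightarrow> 'a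
    \<Rightarrow> nat list \<Rightarrow> nat \<Rightarrow> 'a" where
  "saga_iter f' n \<gamma> h x0 js t = fst (saga_run f' n \<gamma> h x0 (take t js))"

definition saga_avg ::
  "(nat \<Rightarrow> 'a \<Rightarrow> 'a) \<Rightarrow> nat \<Rightarrow> real \<Rightarrow> ('a::real_normed_vector \<Rightarrow> ereal) \<Rightarrow> 'a
    \<Rightarrow> nat list \<Rightarrow> nat \<Rightarrow> 'a" where
  "saga_avg f' n \<gamma> h x0 js k = (1 / real k) *\<^sub>R (\<Sum>t\<in>{1..k}. saga_iter f' n \<gamma> h x0 js t)"

text \<open>All index sequences of length k with entries in {0..<n}; uniform i.i.d. choices.\<close>

definition index_seqs :: "nat \<Rightarrow> nat \<Rightarrow> nat list set" where
  "index_seqs n k = {js. length js = k \<and> set js \<subseteq> {..<n}}"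

end

theory Submission
  imports Defs
begin

text \<open>
  With the Bregman
  gaps D_i(y) = f_i(y) - f_i(x*) - <f_i'(x*), y - x*> and Psi(phi) = (1/n) sum_i D_i(phi_i),
  the potential T(x, phi) = |x - x*|^2 + (3/2) gamma n Psi(phi) satisfies, in expectation
  over the index chosen in one step,
      E[T(next state)] + gamma/2 (F(x^{k+1}) - F(x*)) <= T(current state).
  Summing this over k steps (i.e. over all n^k index sequences) bounds the accumulated
  optimality gaps by 2 T(x^0, x^0) / gamma, and Jensen's inequality for the convex F
  transfers the bound to the averaged iterate.
\<close>

section \<open>Smooth convex functions\<close>

definition has_lipschitz_gradient :: "real \<Rightarrow> ('a::real_inner \<Rightarrow> real) \<Rightarrow> ('a \<Rightarrow> 'a) \<Rightarrow> bool" where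
  "has_lipschitz_gradient L p G \<longleftrightarrow>
     (\<forall>z. (p has_derivative (\<lambda>v. G z \<bullet> v)) (at z)) \<and> (\<forall>x y. norm (G x - G y) \<le> L * norm (x - y))"

lemma descent_upper:
  fixes p :: "'a::real_inner \<Rightarrow> real"
  assumes "has_lipschitz_gradient L p G"
  shows "p y \<le> p x + G x \<bullet> (y - x) + L/2 * (norm (y - x))^2"
proof -
  have der: "\<And>z. (p has_derivative (\<lambda>v. G z \<bullet> v)) (at z)"
    and lip: "\<And>x y. norm (G x - G y) \<le> L * norm (x - y)"
    using assms by (auto simp: has_lipschitz_gradient_def)
  define d where "d = y - x"
  have line_deriv: "((\<lambda>t. p (x + t *\<^sub>R d)) has_real_derivative (G (x + t *\<^sub>R d) \<bullet> d)) (at t)" for t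
  proof -
    have "((\<lambda>t. x + t *\<^sub>R d) has_derivative (\<lambda>s. s *\<^sub>R d)) (at t)"
      by (auto intro!: derivative_eq_intros)
    from has_derivative_compose[OF this der]
    have "((\<lambda>t. p (x + t *\<^sub>R d)) has_derivative (\<lambda>s. G (x + t *\<^sub>R d) \<bullet> (s *\<^sub>R d))) (at t)" .
    moreover have "(\<lambda>s. G (x + t *\<^sub>R d) \<bullet> (s *\<^sub>R d)) = (*) (G (x + t *\<^sub>R d) \<bullet> d)"
      by (rule ext) simp
    ultimately show ?thesis
      by (simp add: has_field_derivative_def)
  qed
  have slope_bound: "G (x + t *\<^sub>R d) \<bullet> d - G x \<bullet> d \<le> L * t * (norm d)^2" if "t \<ge> 0" for t
  proof -
    have "(G (x + t *\<^sub>R d) - G x) \<bullet> d \<le> norm (G (x + t *\<^sub>R d) - G x) * norm d"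
      by (rule norm_cauchy_schwarz)
    also have "\<dots> \<le> (L * norm (t *\<^sub>R d)) * norm d"
      using lip[of "x + t *\<^sub>R d" x] by (intro mult_right_mono) auto
    also have "\<dots> = L * t * (norm d)^2" using that by (simp add: power2_eq_square)
    finally show ?thesis by (simp add: inner_diff_left)
  qed
  define q where "q = (\<lambda>t. p (x + t *\<^sub>R d) - t * (G x \<bullet> d) - L/2 * t^2 * (norm d)^2)"
  have "q 1 \<le> q 0"
  proof (rule deriv_nonpos_imp_antimono[where g = q and a = 0 and b = 1
        and g' = "\<lambda>t. G (x + t *\<^sub>R d) \<bullet> d - G x \<bullet> d - L * t * (norm d)^2"])
    fix t :: real
    show "(q has_real_derivative G (x + t *\<^sub>R d) \<bullet> d - G x \<bullet> d - L * t * (norm d)^2) (at t)"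
      if "t \<in> {0..1}"
      unfolding q_def by (rule derivative_eq_intros line_deriv refl | simp)+
    assume "t \<in> {0..1}"
    then show "G (x + t *\<^sub>R d) \<bullet> d - G x \<bullet> d - L * t * (norm d)^2 \<le> 0"
      using slope_bound[of t] by auto
  qed simp
  then show ?thesis
    by (simp add: d_def q_def)
qed

text \<open>The reverse bound, by applying the descent lemma to -p.\<close>

lemma descent_lower:
  fixes p :: "'a::real_inner \<Rightarrow> real"
  assumes "has_lipschitz_gradient L p G"
  shows "p x + G x \<bullet> (y - x) - L/2 * (norm (y - x))^2 \<le> p y"
proof -
  have "has_lipschitz_gradient L (\<lambda>z. - p z) (\<lambda>z. - G z)"
    using assms unfolding has_lipschitz_gradient_def
    by (auto intro!: derivative_eq_intros simp: norm_minus_commute add.commute)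
  from descent_upper[OF this, of y x] show ?thesis by simp
qed

text \<open>If a is bounded by t b for all t in (0,1], then a is non-positive.  This is the limiting
  argument t -> 0 behind all first-order optimality conditions below.\<close>

lemma nonpos_if_le_scaled:
  fixes a b :: real
  assumes "\<And>t. 0 < t \<Longrightarrow> t \<le> 1 \<Longrightarrow> a \<le> t * b"
  shows "a \<le> 0"
proof (rule ccontr)
  assume a: "\<not> a \<le> 0"
  show False
  proof (cases "b \<le> 0")
    case True then show ?thesis using assms[of 1] a by auto
  next
    case False
    define t where "t = min 1 (a / (2*b))"
    have t: "0 < t" "t \<le> 1" using a False by (auto simp: t_def)
    have "t * b \<le> a / (2*b) * b" using False by (intro mult_right_mono) (auto simp: t_def)
    also have "\<dots> = a/2" using False by auto
    finally show ?thesis using assms[OF t] a by auto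
  qed
qed

lemma convex_tangent_below:
  fixes p :: "'a::real_inner \<Rightarrow> real"
  assumes conv: "convex_on UNIV p" and smooth: "has_lipschitz_gradient L p G"
  shows "p x + G x \<bullet> (z - x) \<le> p z"
proof -
  define d where "d = z - x"
  have "p x + G x \<bullet> d - p z \<le> 0"
  proof (rule nonpos_if_le_scaled[where b = "L/2 * (norm d)^2"])
    fix t :: real assume t: "0 < t" "t \<le> 1"
    have seg: "x + t *\<^sub>R d = (1 - t) *\<^sub>R x + t *\<^sub>R z" by (simp add: d_def algebra_simps)
    have "p (x + t *\<^sub>R d) \<le> (1 - t) * p x + t * p z"
      unfolding seg using convex_onD[OF conv, of t x z] t by auto
    moreover have "p x + G x \<bullet> (t *\<^sub>R d) - L/2 * (norm (t *\<^sub>R d))^2 \<le> p (x + t *\<^sub>R d)"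
      using descent_lower[OF smooth, of x "x + t *\<^sub>R d"] by simp
    ultimately have "t * (p x + G x \<bullet> d - p z) \<le> t * (t * (L/2 * (norm d)^2))"
      using t by (simp add: power2_eq_square algebra_simps)
    then show "p x + G x \<bullet> d - p z \<le> t * (L / 2 * (norm d)\<^sup>2)"
      using t by simp
  qed
  then show ?thesis by (simp add: d_def)
qed

text \<open>Cocoercivity: for a convex function with L-Lipschitz gradient,
  the linearisation error dominates |G y - G x|^2 / (2L).  This controls the variance of the
  SAGA gradient estimator.\<close>

lemma cocoercive_lower_bound:
  fixes p :: "'a::real_inner \<Rightarrow> real"
  assumes conv: "convex_on UNIV p" and smooth: "has_lipschitz_gradient L p G" and L_pos: "L > 0"
  shows "p x + G x \<bullet> (y - x) + (norm (G y - G x))^2 / (2*L) \<le> p y"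
proof -
  \<comment> \<open>tilt p so that x becomes a minimiser, then compare with one gradient step from y\<close>
  define q where "q z = p z - G x \<bullet> z" for z
  define H where "H z = G z - G x" for z
  have "has_lipschitz_gradient L q H"
    unfolding has_lipschitz_gradient_def
  proof safe
    fix z
    have "(q has_derivative (\<lambda>v. G z \<bullet> v - G x \<bullet> v)) (at z)"
      using smooth unfolding q_def has_lipschitz_gradient_def
      by (intro derivative_eq_intros) auto
    then show "(q has_derivative (\<lambda>v. H z \<bullet> v)) (at z)" by (simp add: H_def inner_diff_left)
  next
    fix u v show "norm (H u - H v) \<le> L * norm (u - v)"
      using smooth by (simp add: H_def has_lipschitz_gradient_def)
  qed
  note q_descent = descent_upper[OF this]
  define u where "u = y - (1/L) *\<^sub>R H y"
  have "q x \<le> q u"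
    using convex_tangent_below[OF conv smooth, of x u] by (simp add: q_def inner_diff_right)
  also have "\<dots> \<le> q y + H y \<bullet> (u - y) + L/2 * (norm (u - y))^2"
    by (rule q_descent)
  also have "\<dots> = q y - (norm (H y))^2 / (2*L)"
    using L_pos by (simp add: u_def power2_norm_eq_inner field_simps flip: power2_eq_square)
  finally show ?thesis
    by (simp add: q_def H_def inner_diff_right)
qed

section \<open>Inequalities in inner product spaces\<close>

lemma norm_add_scaled_sq:
  fixes a b :: "'a::real_inner"
  shows "(norm (a + t *\<^sub>R b))^2 = (norm a)^2 + 2 * t * (a \<bullet> b) + t^2 * (norm b)^2"
  unfolding power2_norm_eq_inner
  by (simp add: inner_add_left inner_add_right inner_commute power2_eq_square algebra_simps)

text \<open>Distance of a midpoint (parallelogram law); gives strict convexity of |z - w|^2.\<close>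

lemma midpoint_dist_sq:
  fixes p q w :: "'a::real_inner"
  shows "(norm ((1/2) *\<^sub>R p + (1/2) *\<^sub>R q - w))^2
           = ((norm (p - w))^2 + (norm (q - w))^2)/2 - (norm (p - q))^2/4"
proof -
  have "(1/2) *\<^sub>R p + (1/2) *\<^sub>R q - w = (1/2) *\<^sub>R ((p - w) + (q - w))"
    by (simp add: algebra_simps flip: scaleR_add_right)
  moreover have "p - q = (p - w) - (q - w)" by simp
  ultimately show ?thesis
    by (simp add: power2_norm_eq_inner inner_add_left inner_add_right inner_diff_left
        inner_diff_right inner_commute field_simps)
qed

text \<open>Young's inequality with the weights used for the step size 1/(3L).\<close>

lemma young_inner:
  fixes X Y :: "'a::real_inner"
  shows "2 * (X \<bullet> Y) \<le> 3/2 * (norm X)^2 + 2/3 * (norm Y)^2"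
proof -
  have "0 \<le> (norm (X - (2/3) *\<^sub>R Y))^2" by simp
  also have "(norm (X - (2/3) *\<^sub>R Y))^2 = (norm X)^2 - 4/3 * (X \<bullet> Y) + 4/9 * (norm Y)^2"
    unfolding power2_norm_eq_inner
    by (simp add: inner_diff_left inner_diff_right inner_commute algebra_simps)
  finally show ?thesis by simp
qed

lemma norm_diff_sq_le:
  fixes a b :: "'a::real_inner"
  shows "(norm (a - b))^2 \<le> 2 * (norm a)^2 + 2 * (norm b)^2"
proof -
  have "(norm (a - b))^2 + (norm (a + b))^2 = 2 * (norm a)^2 + 2 * (norm b)^2"
    unfolding power2_norm_eq_inner
    by (simp add: inner_diff_left inner_diff_right inner_add_left inner_add_right inner_commute
        algebra_simps)
  then show ?thesis using zero_le_power2[of "norm (a + b)"] by linarith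
qed

text \<open>If e . e <= u . e then |e| <= |u| (the core of firm non-expansiveness).\<close>

lemma norm_sq_le_if_inner_le:
  fixes e u :: "'a::real_inner"
  assumes "e \<bullet> e \<le> u \<bullet> e"
  shows "(norm e)^2 \<le> (norm u)^2"
proof -
  have "(norm e)^2 \<le> norm u * norm e"
    using assms norm_cauchy_schwarz[of u e] by (simp add: power2_norm_eq_inner)
  then have "norm e \<le> norm u"
    by (cases "norm e = 0") (auto simp: power2_eq_square)
  then show ?thesis by (simp add: power_mono)
qed

lemma sum_sq_centered_le:
  fixes Y :: "nat \<Rightarrow> 'a::real_inner"
  assumes n: "n \<ge> 1"
  shows "(\<Sum>j<n. (norm (Y j - (1/real n) *\<^sub>R (\<Sum>i<n. Y i)))^2) \<le> (\<Sum>j<n. (norm (Y j))^2)"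
proof -
  define c where "c = (1/real n) *\<^sub>R (\<Sum>i<n. Y i)"
  have sum_Y: "(\<Sum>i<n. Y i) = real n *\<^sub>R c" using n by (simp add: c_def)
  have "(\<Sum>j<n. (norm (Y j - c))^2) = (\<Sum>j<n. (norm (Y j))^2 - 2 * (Y j \<bullet> c) + (norm c)^2)"
    by (rule sum.cong) (simp_all add: power2_norm_eq_inner inner_diff_left inner_diff_right inner_commute)
  also have "\<dots> = (\<Sum>j<n. (norm (Y j))^2) - 2 * ((\<Sum>j<n. Y j) \<bullet> c) + real n * (norm c)^2"
    by (simp add: sum.distrib sum_subtractf sum_distrib_left inner_sum_left)
  also have "\<dots> = (\<Sum>j<n. (norm (Y j))^2) - real n * (norm c)^2"
    by (simp add: sum_Y power2_norm_eq_inner)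
  also have "\<dots> \<le> (\<Sum>j<n. (norm (Y j))^2)" by simp
  finally show ?thesis by (simp add: c_def)
qed

lemma sum_sq_saga_direction_le:
  fixes a b :: "nat \<Rightarrow> 'a::real_inner"
  assumes n: "n \<ge> 1"
  shows "(\<Sum>j<n. (norm (a j - (b j - (1/real n) *\<^sub>R (\<Sum>i<n. b i))))^2)
           \<le> 2 * (\<Sum>j<n. (norm (a j))^2) + 2 * (\<Sum>j<n. (norm (b j))^2)"
proof -
  have "(\<Sum>j<n. (norm (a j - (b j - (1/real n) *\<^sub>R (\<Sum>i<n. b i))))^2)
      \<le> (\<Sum>j<n. 2 * (norm (a j))^2 + 2 * (norm (b j - (1/real n) *\<^sub>R (\<Sum>i<n. b i)))^2)"
    by (intro sum_mono norm_diff_sq_le)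
  also have "\<dots> = 2 * (\<Sum>j<n. (norm (a j))^2)
                  + 2 * (\<Sum>j<n. (norm (b j - (1/real n) *\<^sub>R (\<Sum>i<n. b i)))^2)"
    by (simp add: sum.distrib sum_distrib_left)
  also have "\<dots> \<le> 2 * (\<Sum>j<n. (norm (a j))^2) + 2 * (\<Sum>j<n. (norm (b j))^2)"
    using sum_sq_centered_le[OF n, of b] by simp
  finally show ?thesis .
qed

lemma sum_sq_saga_deviation_le:
  fixes a b :: "nat \<Rightarrow> 'a::real_inner"
  assumes n: "n \<ge> 1"
  shows "(\<Sum>j<n. (norm ((a j - b j) - (1/real n) *\<^sub>R (\<Sum>i<n. a i - b i)))^2)
           \<le> 2 * (\<Sum>j<n. (norm (a j))^2) + 2 * (\<Sum>j<n. (norm (b j))^2)"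
proof -
  have "(\<Sum>j<n. (norm ((a j - b j) - (1/real n) *\<^sub>R (\<Sum>i<n. a i - b i)))^2)
      \<le> (\<Sum>j<n. (norm (a j - b j))^2)"
    by (rule sum_sq_centered_le[OF n])
  also have "\<dots> \<le> (\<Sum>j<n. 2 * (norm (a j))^2 + 2 * (norm (b j))^2)"
    by (intro sum_mono norm_diff_sq_le)
  also have "\<dots> = 2 * (\<Sum>j<n. (norm (a j))^2) + 2 * (\<Sum>j<n. (norm (b j))^2)"
    by (simp add: sum.distrib sum_distrib_left)
  finally show ?thesis .
qed


section \<open>Proximal points of proper closed convex functions\<close>

lemma minimising_sequence:
  fixes V :: "'b \<Rightarrow> real"
  assumes ne: "S \<noteq> {}" and bdd: "bdd_below (V ` S)"
  obtains zs where "\<And>k. zs k \<in> S" "\<And>k. V (zs k) \<le> Inf (V ` S) + 1"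
    and "(\<lambda>k. V (zs k)) \<longlonglongrightarrow> Inf (V ` S)"
proof -
  define m where "m = Inf (V ` S)"
  have "\<exists>z. z \<in> S \<and> V z < m + 1 / real (Suc k)" for k
  proof -
    have "Inf (V ` S) < m + 1 / real (Suc k)" by (simp add: m_def)
    then show ?thesis using cInf_less_iff[of "V ` S"] ne bdd by auto
  qed
  then obtain zs where zs: "\<And>k. zs k \<in> S" "\<And>k. V (zs k) < m + 1 / real (Suc k)"
    by metis
  have up: "V (zs k) \<le> m + 1" for k
    using zs(2)[of k] by (smt (verit) divide_le_eq_1 of_nat_0_le_iff of_nat_Suc)
  have "(\<lambda>k. V (zs k)) \<longlonglongrightarrow> m"
  proof (rule tendsto_sandwich[where f = "\<lambda>k. m" and h = "\<lambda>k. m + 1 / real (Suc k)"])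
    show "\<forall>\<^sub>F k in sequentially. m \<le> V (zs k)"
      using cInf_lower[OF _ bdd] zs(1) by (auto simp: m_def)
    show "\<forall>\<^sub>F k in sequentially. V (zs k) \<le> m + 1 / real (Suc k)"
      by (intro always_eventually allI less_imp_le zs(2))
    show "(\<lambda>k. m + 1 / real (Suc k)) \<longlonglongrightarrow> m"
      using tendsto_add[OF tendsto_const LIMSEQ_inverse_real_of_nat, of m]
      by (simp add: inverse_eq_divide)
  qed simp
  then show ?thesis using that[OF zs(1)] up by (simp add: m_def)
qed

locale proper_closed_convex =
  fixes h :: "'a::euclidean_space \<Rightarrow> ereal"
  assumes proper: "proper_fun h" and closed: "closed_fun h" and convex: "convex_fun h"
begin

definition hr :: "'a \<Rightarrow> real" where "hr x = real_of_ereal (h x)"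

lemma finite_eq: "h x \<noteq> \<infinity> \<Longrightarrow> h x = ereal (hr x)"
  using proper by (cases "h x") (auto simp: hr_def proper_fun_def)

lemma convex_combination:
  assumes "h x \<noteq> \<infinity>" "h y \<noteq> \<infinity>" "0 \<le> t" "t \<le> 1"
  shows "h ((1-t) *\<^sub>R x + t *\<^sub>R y) \<noteq> \<infinity>"
    and "hr ((1-t) *\<^sub>R x + t *\<^sub>R y) \<le> (1-t) * hr x + t * hr y"
proof -
  have "(x, hr x) \<in> epigraph h" "(y, hr y) \<in> epigraph h"
    using finite_eq[OF assms(1)] finite_eq[OF assms(2)] by (simp_all add: epigraph_def)
  from convexD[OF convex[unfolded convex_fun_def] this, of "1-t" t]
  have le: "h ((1-t) *\<^sub>R x + t *\<^sub>R y) \<le> ereal ((1-t) * hr x + t * hr y)"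
    using assms by (auto simp: epigraph_def)
  then show fin: "h ((1-t) *\<^sub>R x + t *\<^sub>R y) \<noteq> \<infinity>" by auto
  show "hr ((1-t) *\<^sub>R x + t *\<^sub>R y) \<le> (1-t) * hr x + t * hr y"
    using le finite_eq[OF fin] by simp
qed

definition prox_obj :: "real \<Rightarrow> 'a \<Rightarrow> 'a \<Rightarrow> real" where
  "prox_obj gm w z = hr z + (norm (z - w))^2 / (2*gm)"

definition is_prox_point :: "real \<Rightarrow> 'a \<Rightarrow> 'a \<Rightarrow> bool" where
  "is_prox_point gm w p \<longleftrightarrow>
     (\<forall>z. h p + ereal ((norm (p - w))^2 / (2*gm)) \<le> h z + ereal ((norm (z - w))^2 / (2*gm)))"

lemma prox_point_finite:
  assumes "is_prox_point gm w p" shows "h p \<noteq> \<infinity>"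
proof -
  obtain z where z: "h z \<noteq> \<infinity>" using proper by (auto simp: proper_fun_def)
  from assms have "h p + ereal ((norm (p - w))^2 / (2*gm)) \<le> h z + ereal ((norm (z - w))^2 / (2*gm))"
    unfolding is_prox_point_def by blast
  then show ?thesis using finite_eq[OF z] by auto
qed

lemma prox_point_le:
  assumes "is_prox_point gm w p" "h z \<noteq> \<infinity>" shows "prox_obj gm w p \<le> prox_obj gm w z"
proof -
  from assms(1) have "h p + ereal ((norm (p - w))^2 / (2*gm)) \<le> h z + ereal ((norm (z - w))^2 / (2*gm))"
    unfolding is_prox_point_def by blast
  then show ?thesis
    using finite_eq[OF prox_point_finite[OF assms(1)]] finite_eq[OF assms(2)] by (simp add: prox_obj_def)
qed

text \<open>Uniqueness: the proximal objective is strictly convex.\<close>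

lemma prox_point_unique:
  assumes gp: "gm > 0" and p: "is_prox_point gm w p" and q: "is_prox_point gm w q"
  shows "q = p"
proof -
  have pf: "h p \<noteq> \<infinity>" and qf: "h q \<noteq> \<infinity>" using p q by (simp_all add: prox_point_finite)
  note V = prox_obj_def
  define mid where "mid = (1 - 1/2) *\<^sub>R p + (1/2) *\<^sub>R q"
  have mf: "h mid \<noteq> \<infinity>" and hm: "hr mid \<le> hr p / 2 + hr q / 2"
    using convex_combination[OF pf qf, of "1/2"] by (simp_all add: mid_def)
  have nm: "(norm (mid - w))^2 = ((norm (p - w))^2 + (norm (q - w))^2)/2 - (norm (p - q))^2/4"
    using midpoint_dist_sq[of p q w] by (simp add: mid_def)
  have "prox_obj gm w p \<le> prox_obj gm w mid" by (rule prox_point_le[OF p mf])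
  also have "\<dots> = hr mid + ((norm (p - w))^2 / (2*gm) + (norm (q - w))^2 / (2*gm))/2
                    - (norm (p - q))^2 / (8*gm)"
    using gp by (simp add: V nm field_simps)
  also have "\<dots> \<le> (prox_obj gm w p + prox_obj gm w q)/2 - (norm (p - q))^2 / (8*gm)"
    using hm unfolding V by argo
  finally have "(norm (p - q))^2 / (8*gm) \<le> (prox_obj gm w q - prox_obj gm w p) / 2"
    by argo
  also have "\<dots> \<le> 0" using prox_point_le[OF q pf] by simp
  finally show ?thesis using gp by (simp add: divide_le_0_iff)
qed

text \<open>We assume that h lies above an affine function; the proximal objective is
  then coercive, and a minimising sequence has a limit point, which is a minimiser because the
  epigraph of h is closed.\<close>

context
  fixes gm :: real and w z0 g :: 'a and a :: real
  assumes gp: "gm > 0"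
    and affine_minorant: "\<And>z. h z \<noteq> \<infinity> \<Longrightarrow> a - g \<bullet> (z - z0) \<le> hr z"
begin

lemma prox_obj_lower:
  assumes "h z \<noteq> \<infinity>"
  shows "a - norm g * (norm (z - w) + norm (w - z0)) + (norm (z - w))^2/(2*gm) \<le> prox_obj gm w z"
proof -
  have "g \<bullet> (z - z0) \<le> norm g * norm (z - z0)" by (rule norm_cauchy_schwarz)
  also have "\<dots> \<le> norm g * (norm (z - w) + norm (w - z0))"
    using norm_triangle_ineq[of "z - w" "w - z0"] by (intro mult_left_mono) auto
  finally show ?thesis using affine_minorant[OF assms] by (simp add: prox_obj_def)
qed

lemma prox_obj_bdd_below: "bdd_below (prox_obj gm w ` {z. h z \<noteq> \<infinity>})"
proof (rule bdd_belowI2)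
  fix z assume fin: "z \<in> {z. h z \<noteq> \<infinity>}"
  define r where "r = norm (z - w)"
  have "0 \<le> (r - gm * norm g)^2 / (2*gm)" using gp by auto
  also have "(r - gm * norm g)^2 / (2*gm) = r^2/(2*gm) - norm g * r + gm * (norm g)^2/2"
    using gp by (simp add: power2_eq_square field_simps)
  finally show "a - norm g * norm (w - z0) - gm * (norm g)^2 / 2 \<le> prox_obj gm w z"
    using prox_obj_lower[of z] fin by (simp add: r_def algebra_simps)
qed

lemma prox_obj_sublevel_bounded:
  "\<exists>B. \<forall>z. h z \<noteq> \<infinity> \<longrightarrow> prox_obj gm w z \<le> c \<longrightarrow> norm (z - w) \<le> B"
proof (intro exI allI impI)
  define b where "b = norm g"
  define C where "C = c - a + b * norm (w - z0)"
  fix z assume fin: "h z \<noteq> \<infinity>" and lev: "prox_obj gm w z \<le> c"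
  define r where "r = norm (z - w)"
  have b0: "b \<ge> 0" by (simp add: b_def)
  have quad: "r^2/(2*gm) - b * r \<le> C"
    using prox_obj_lower[OF fin] lev by (simp add: C_def b_def r_def algebra_simps)
  show "norm (z - w) \<le> 2 * gm * (b + \<bar>C\<bar>) + 1"
  proof (rule ccontr)
    assume "\<not> ?thesis"
    then have rB: "r > 2 * gm * (b + \<bar>C\<bar>) + 1" by (simp add: r_def)
    have r1: "r \<ge> 1" using rB gp b0 by (smt (verit) mult_nonneg_nonneg)
    have "r / (2*gm) > b + \<bar>C\<bar>" using rB gp by (simp add: field_simps)
    then have big: "r/(2*gm) - b > \<bar>C\<bar>" by simp
    have "r/(2*gm) - b \<le> r * (r/(2*gm) - b)"
      using r1 big mult_right_mono[of 1 r "r/(2*gm) - b"] by simp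
    also have "\<dots> = r^2/(2*gm) - b * r" by (simp add: power2_eq_square field_simps)
    finally show False using quad big by linarith
  qed
qed

text \<open>Lower semicontinuity of the proximal objective, from closedness of the epigraph.\<close>

lemma prox_obj_lsc:
  assumes fin: "\<And>k. h (zs k) \<noteq> \<infinity>" and lim: "zs \<longlonglongrightarrow> l"
    and obj_lim: "(\<lambda>k. prox_obj gm w (zs k)) \<longlonglongrightarrow> m"
  shows "h l \<noteq> \<infinity>" and "prox_obj gm w l \<le> m"
proof -
  define m' where "m' = m - (norm (l - w))^2 / (2*gm)"
  have "(\<lambda>k. prox_obj gm w (zs k) - (norm (zs k - w))^2 / (2*gm)) \<longlonglongrightarrow> m'"
    unfolding m'_def using gp by (intro tendsto_intros obj_lim lim) auto
  then have "(\<lambda>k. (zs k, hr (zs k))) \<longlonglongrightarrow> (l, m')"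
    by (intro tendsto_Pair lim) (simp add: prox_obj_def)
  moreover have "\<forall>k. (zs k, hr (zs k)) \<in> epigraph h"
    using finite_eq[OF fin] by (simp add: epigraph_def)
  ultimately have "(l, m') \<in> epigraph h"
    using closed[unfolded closed_fun_def closed_sequential_limits, rule_format,
        of "\<lambda>k. (zs k, hr (zs k))" "(l, m')"] by blast
  then have hl: "h l \<le> ereal m'" by (simp add: epigraph_def)
  then show lf: "h l \<noteq> \<infinity>" by auto
  show "prox_obj gm w l \<le> m" using hl finite_eq[OF lf] by (simp add: prox_obj_def m'_def)
qed

lemma prox_point_exists: "\<exists>p. is_prox_point gm w p"
proof -
  define S where "S = {z. h z \<noteq> \<infinity>}"
  define m where "m = Inf (prox_obj gm w ` S)"
  have bdd: "bdd_below (prox_obj gm w ` S)" using prox_obj_bdd_below by (simp add: S_def)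
  have "S \<noteq> {}" using proper by (auto simp: S_def proper_fun_def)
  then obtain zs where zs: "\<And>k. zs k \<in> S" "\<And>k. prox_obj gm w (zs k) \<le> m + 1"
    and obj_lim: "(\<lambda>k. prox_obj gm w (zs k)) \<longlonglongrightarrow> m"
    using minimising_sequence[OF _ bdd] unfolding m_def by blast
  obtain B where B: "\<And>z. h z \<noteq> \<infinity> \<Longrightarrow> prox_obj gm w z \<le> m + 1 \<Longrightarrow> norm (z - w) \<le> B"
    using prox_obj_sublevel_bounded[of "m + 1"] by blast
  have "zs k \<in> cball w B" for k
    using B[of "zs k"] zs by (simp add: S_def dist_norm norm_minus_commute)
  then have "bounded (range zs)" by (intro bounded_subset[OF bounded_cball]) auto
  then obtain l r where r: "strict_mono r" and lim: "(zs \<circ> r) \<longlonglongrightarrow> l"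
    using bounded_imp_convergent_subsequence by blast
  have fin: "h ((zs \<circ> r) k) \<noteq> \<infinity>" for k using zs(1) by (simp add: S_def)
  have "(\<lambda>k. prox_obj gm w ((zs \<circ> r) k)) \<longlonglongrightarrow> m"
    using LIMSEQ_subseq_LIMSEQ[OF obj_lim r] by (simp add: comp_def)
  note l = prox_obj_lsc[OF fin lim this]
  have "is_prox_point gm w l"
    unfolding is_prox_point_def
  proof
    fix z
    show "h l + ereal ((norm (l - w))\<^sup>2 / (2 * gm)) \<le> h z + ereal ((norm (z - w))\<^sup>2 / (2 * gm))"
    proof (cases "h z = \<infinity>")
      case False
      then have "prox_obj gm w l \<le> prox_obj gm w z"
        using l(2) cInf_lower[OF _ bdd, of "prox_obj gm w z"] by (simp add: S_def m_def)
      then show ?thesis using finite_eq[OF l(1)] finite_eq[OF False] by (simp add: prox_obj_def)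
    qed simp
  qed
  then show ?thesis ..
qed

lemma prox_characterisation:
  shows prox_finite: "h (prox h gm w) \<noteq> \<infinity>"
    and prox_variational: "h z \<noteq> \<infinity> \<Longrightarrow> hr (prox h gm w) + (w - prox h gm w) \<bullet> (z - prox h gm w) / gm \<le> hr z"
proof -
  obtain p where P: "is_prox_point gm w p" using prox_point_exists by blast
  have "prox h gm w = (THE p. is_prox_point gm w p)"
    by (simp add: prox_def is_prox_point_def)
  also have "\<dots> = p" using P prox_point_unique[OF gp P] by (rule the_equality)
  finally have pe: "prox h gm w = p" .
  have pf: "h p \<noteq> \<infinity>" by (rule prox_point_finite[OF P])
  then show "h (prox h gm w) \<noteq> \<infinity>" by (simp add: pe)
  assume hz: "h z \<noteq> \<infinity>"
  have "hr p - hr z + (w - p) \<bullet> (z - p) / gm \<le> 0"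
  proof (rule nonpos_if_le_scaled[where b = "(norm (z - p))^2 / (2*gm)"])
    fix t :: real assume t: "0 < t" "t \<le> 1"
    define zt where "zt = (1 - t) *\<^sub>R p + t *\<^sub>R z"
    have zf: "h zt \<noteq> \<infinity>" and hc: "hr zt \<le> (1 - t) * hr p + t * hr z"
      using convex_combination[OF pf hz, of t] t by (simp_all add: zt_def)
    have zt_w: "zt - w = (p - w) + t *\<^sub>R (z - p)" by (simp add: zt_def algebra_simps)
    have zt_dist: "(norm (zt - w))^2
        = (norm (p - w))^2 - 2 * t * ((w - p) \<bullet> (z - p)) + t^2 * (norm (z - p))^2"
      unfolding zt_w norm_add_scaled_sq by (simp add: inner_diff_left algebra_simps)
    have "hr p + (norm (p - w))^2 / (2*gm) \<le> (1 - t) * hr p + t * hr z + (norm (zt - w))^2 / (2*gm)"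
      using prox_point_le[OF P zf] hc unfolding prox_obj_def by linarith
    then have "hr p + (norm (p - w))^2 / (2*gm) \<le> (1 - t) * hr p + t * hr z
       + ((norm (p - w))^2 - 2 * t * ((w - p) \<bullet> (z - p)) + t^2 * (norm (z - p))^2) / (2*gm)"
      unfolding zt_dist .
    then have "t * (hr p - hr z + (w - p) \<bullet> (z - p) / gm) \<le> t * (t * ((norm (z - p))^2 / (2*gm)))"
      using gp by (simp add: field_simps power2_eq_square)
    then show "hr p - hr z + (w - p) \<bullet> (z - p) / gm \<le> t * ((norm (z - p))^2 / (2*gm))"
      by (rule mult_left_le_imp_le) (use t in auto)
  qed
  then show "hr (prox h gm w) + (w - prox h gm w) \<bullet> (z - prox h gm w) / gm \<le> hr z"
    using pe by simp
qed

end

end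


section \<open>One step of SAGA\<close>

text \<open>The final linear combination in the one-step analysis, isolated as pure arithmetic.
  With g = 1/(3L): AP is the expected squared distance after the step; A and B are the two
  available bounds on it; AVg, AVx are second moments of the SAGA direction, bounded via
  cocoercivity by the gradient gaps AA (at x) and AB (at the stored points, controlled by the
  Bregman potential P).  The result is bound A with weight 3/4 plus bound B with weight 1/4.\<close>

lemma saga_step_arithmetic:
  fixes Rq AP AF AH fx fopt hopt Ix gd AA AB AVg AVx P g L :: real
  assumes g: "g = 1/(3*L)" and Lp: "L > 0"
    and A: "AP \<le> Rq - 2*g*(Ix - gd) + g^2*AVg"
    and B: "AP \<le> Rq + 2*g*(hopt - AH) + 2*g*(fx - AF) - 2*g*Ix + 3/2*g^2*AVx"
    and V1: "AVg \<le> 2*AA + 2*AB" and V2: "AVx \<le> 2*AA + 2*AB"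
    and C: "AA \<le> 2*L*(fopt - fx + Ix)" and PB: "AB \<le> 2*L*P" and AA0: "AA \<ge> 0"
  shows "AP - 3/2*g*P + 3/2*g*(fx - fopt - gd) + g/2*(AF + AH - fopt - hopt) \<le> Rq"
proof -
  have gp: "g > 0" using g Lp by simp
  have scale: "g^2 * (2*L*X) = 2/3 * (g*X)" for X
    using g Lp by (simp add: power2_eq_square field_simps)
  have s1: "g^2*AVg \<le> 2*(g^2*AA) + 2*(g^2*AB)"
    using mult_left_mono[OF V1, of "g^2"] by (simp add: algebra_simps)
  have s2: "g^2*AVx \<le> 2*(g^2*AA) + 2*(g^2*AB)"
    using mult_left_mono[OF V2, of "g^2"] by (simp add: algebra_simps)
  have s3: "g^2*AA \<le> 2/3*(g*fopt) - 2/3*(g*fx) + 2/3*(g*Ix)"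
    using mult_left_mono[OF C, of "g^2"] scale[of "fopt - fx + Ix"] by (simp add: algebra_simps)
  have s4: "g^2*AB \<le> 2/3*(g*P)"
    using mult_left_mono[OF PB, of "g^2"] scale[of P] by simp
  have s5: "0 \<le> g^2*AA" using AA0 by simp
  have A': "AP \<le> Rq - 2*(g*Ix) + 2*(g*gd) + g^2*AVg" using A by (simp add: algebra_simps)
  have B': "AP \<le> Rq + 2*(g*hopt) - 2*(g*AH) + 2*(g*fx) - 2*(g*AF) - 2*(g*Ix) + 3/2*(g^2*AVx)"
    using B by (simp add: algebra_simps)
  have "AP - 3/2*(g*P) + 3/2*(g*fx) - 3/2*(g*fopt) - 3/2*(g*gd) + 1/2*(g*AF) + 1/2*(g*AH)
        - 1/2*(g*fopt) - 1/2*(g*hopt) \<le> Rq"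
    using A' B' s1 s2 s3 s4 s5 by linarith
  then show ?thesis by (simp add: field_simps)
qed

locale saga_setting = proper_closed_convex h
  for h :: "'a::euclidean_space \<Rightarrow> ereal" +
  fixes fs :: "nat \<Rightarrow> 'a \<Rightarrow> real" and f' :: "nat \<Rightarrow> 'a \<Rightarrow> 'a"
    and n :: nat and L :: real and xstar :: 'a
  assumes n_pos: "n \<ge> 1"
    and L_pos: "L > 0"
    and conv: "\<And>i. i < n \<Longrightarrow> convex_on UNIV (fs i)"
    and grad: "\<And>i x. i < n \<Longrightarrow> (fs i has_derivative (\<lambda>v. f' i x \<bullet> v)) (at x)"
    and lip: "\<And>i x y. i < n \<Longrightarrow> norm (f' i x - f' i y) \<le> L * norm (x - y)"
    and min: "\<And>x. ereal ((1 / real n) * (\<Sum>i<n. fs i xstar)) + h xstar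
                 \<le> ereal ((1 / real n) * (\<Sum>i<n. fs i x)) + h x"
begin

definition E_idx :: "(nat \<Rightarrow> real) \<Rightarrow> real" where
  "E_idx u = (1 / real n) * (\<Sum>j<n. u j)"

lemma E_idx_add [simp]: "E_idx (\<lambda>j. u j + w j) = E_idx u + E_idx w"
  by (simp add: E_idx_def sum.distrib algebra_simps)

lemma E_idx_diff [simp]: "E_idx (\<lambda>j. u j - w j) = E_idx u - E_idx w"
  by (simp add: E_idx_def sum_subtractf algebra_simps)

lemma E_idx_scale [simp]: "E_idx (\<lambda>j. c * u j) = c * E_idx u"
  by (simp add: E_idx_def sum_distrib_left[symmetric])

lemma E_idx_divide [simp]: "E_idx (\<lambda>j. u j / c) = E_idx u / c"
  by (simp add: E_idx_def sum_divide_distrib[symmetric])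

lemma E_idx_const [simp]: "E_idx (\<lambda>j. c) = c"
  using n_pos by (simp add: E_idx_def)

lemma E_idx_mono: "(\<And>j. j < n \<Longrightarrow> u j \<le> w j) \<Longrightarrow> E_idx u \<le> E_idx w"
  unfolding E_idx_def by (intro mult_left_mono sum_mono) auto

lemma E_idx_nonneg: "(\<And>j. j < n \<Longrightarrow> 0 \<le> u j) \<Longrightarrow> 0 \<le> E_idx u"
  using E_idx_mono[of "\<lambda>_. 0" u] by simp

lemma E_idx_inner: "E_idx (\<lambda>j. c \<bullet> v j) = c \<bullet> ((1 / real n) *\<^sub>R (\<Sum>j<n. v j))"
  by (simp add: E_idx_def inner_sum_right)

definition favg :: "'a \<Rightarrow> real" where "favg x = E_idx (\<lambda>i. fs i x)"

definition gavg :: "'a \<Rightarrow> 'a" where "gavg x = (1 / real n) *\<^sub>R (\<Sum>i<n. f' i x)"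

definition gam :: real where "gam = 1 / (3 * L)"

lemma gam_pos: "gam > 0" using L_pos by (simp add: gam_def)

lemma smooth: "i < n \<Longrightarrow> has_lipschitz_gradient L (fs i) (f' i)"
  using grad lip by (simp add: has_lipschitz_gradient_def)

lemma gavg_inner: "gavg x \<bullet> d = E_idx (\<lambda>i. f' i x \<bullet> d)"
  by (simp add: gavg_def E_idx_inner inner_commute)

lemma favg_descent: "favg y \<le> favg x + gavg x \<bullet> (y - x) + L/2 * (norm (y - x))^2"
proof -
  have "favg y \<le> E_idx (\<lambda>i. fs i x + f' i x \<bullet> (y - x) + L/2 * (norm (y - x))^2)"
    unfolding favg_def using descent_upper[OF smooth] by (rule E_idx_mono)
  then show ?thesis by (simp add: favg_def gavg_inner)
qed

lemma grad_diff_sq_le: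
  "i < n \<Longrightarrow> (norm (f' i y - f' i x))^2 \<le> 2 * L * (fs i y - fs i x - f' i x \<bullet> (y - x))"
  using cocoercive_lower_bound[OF conv smooth L_pos, of i x y] L_pos
  by (simp add: field_simps)

definition Fval :: "'a \<Rightarrow> real" where "Fval x = favg x + hr x"

lemma opt_finite: "h xstar \<noteq> \<infinity>"
proof
  assume "h xstar = \<infinity>"
  moreover obtain x where "h x \<noteq> \<infinity>" using proper by (auto simp: proper_fun_def)
  ultimately show False using min[of x] finite_eq[of x] by simp
qed

lemma opt_le: "h z \<noteq> \<infinity> \<Longrightarrow> Fval xstar \<le> Fval z"
  using min[of z] finite_eq[of z] finite_eq[OF opt_finite]
  by (simp add: Fval_def favg_def E_idx_def)

text \<open>Optimality condition: -f'(x*) is a subgradient of h at x*, i.e. h lies above the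
  affine function z |-> h(x*) - <f'(x*), z - x*>.  This also makes prox well defined.\<close>

lemma opt_subgradient:
  assumes hz: "h z \<noteq> \<infinity>"
  shows "hr xstar - gavg xstar \<bullet> (z - xstar) \<le> hr z"
proof -
  define d where "d = z - xstar"
  have "hr xstar - hr z - gavg xstar \<bullet> d \<le> 0"
  proof (rule nonpos_if_le_scaled[where b = "L/2 * (norm d)^2"])
    fix t :: real assume t: "0 < t" "t \<le> 1"
    have seg: "xstar + t *\<^sub>R d = (1 - t) *\<^sub>R xstar + t *\<^sub>R z" by (simp add: d_def algebra_simps)
    note cc = convex_combination[OF opt_finite hz, of t, folded seg]
    have "Fval xstar \<le> Fval (xstar + t *\<^sub>R d)" using cc(1) t by (simp add: opt_le)
    moreover have "favg (xstar + t *\<^sub>R d) \<le> favg xstar + gavg xstar \<bullet> (t *\<^sub>R d) + L/2 * (norm (t *\<^sub>R d))^2"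
      using favg_descent[of "xstar + t *\<^sub>R d" xstar] by simp
    ultimately have "t * (hr xstar - hr z - gavg xstar \<bullet> d) \<le> t * (t * (L/2 * (norm d)^2))"
      using cc(2) t by (simp add: Fval_def power2_eq_square algebra_simps)
    then show "hr xstar - hr z - gavg xstar \<bullet> d \<le> t * (L / 2 * (norm d)\<^sup>2)"
      using t by simp
  qed
  then show ?thesis by (simp add: d_def)
qed

lemma prox_gam_finite: "h (prox h gam w) \<noteq> \<infinity>"
  by (rule prox_finite[OF gam_pos opt_subgradient])

lemma prox_gam_variational:
  "h z \<noteq> \<infinity> \<Longrightarrow> hr (prox h gam w) + (w - prox h gam w) \<bullet> (z - prox h gam w) / gam \<le> hr z"
  by (rule prox_variational[OF gam_pos opt_subgradient])

text \<open>First bound, from firm non-expansiveness of prox and the fixed-point property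
  x* = prox(x* - gam f'(x*)).\<close>

lemma prox_step_dist_dual:
  fixes x v :: 'a
  defines "p \<equiv> prox h gam (x - gam *\<^sub>R v)"
  shows "(norm (p - xstar))^2 \<le> (norm (x - xstar))^2 - 2 * gam * ((x - xstar) \<bullet> (v - gavg xstar))
           + gam^2 * (norm (v - gavg xstar))^2"
proof -
  define w where "w = x - gam *\<^sub>R v"
  define gs where "gs = gavg xstar"
  have "hr p + (w - p) \<bullet> (xstar - p) / gam \<le> hr xstar"
    using prox_gam_variational[OF opt_finite] by (simp add: p_def w_def)
  moreover have "hr xstar - gs \<bullet> (p - xstar) \<le> hr p"
    using opt_subgradient[OF prox_gam_finite] by (simp add: p_def gs_def)
  ultimately have "(w - p) \<bullet> (xstar - p) / gam \<le> gs \<bullet> (p - xstar)" by linarith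
  then have vi: "(w - p) \<bullet> (xstar - p) \<le> gam * (gs \<bullet> (p - xstar))"
    using gam_pos by (simp add: divide_le_eq mult.commute)
  define e where "e = p - xstar"
  define u where "u = (x - xstar) + (- gam) *\<^sub>R (v - gs)"
  have ue: "u - e = (w - p) + gam *\<^sub>R gs" by (simp add: u_def e_def w_def algebra_simps)
  have "(u - e) \<bullet> e = - ((w - p) \<bullet> (xstar - p)) + gam * (gs \<bullet> (p - xstar))"
    unfolding ue by (simp add: e_def inner_add_left inner_diff_right right_diff_distrib)
  then have "e \<bullet> e \<le> u \<bullet> e" using vi by (simp add: inner_diff_left)
  then have "(norm e)^2 \<le> (norm u)^2" by (rule norm_sq_le_if_inner_le)
  also have "(norm u)^2 = (norm (x - xstar))^2 + 2 * (- gam) * ((x - xstar) \<bullet> (v - gs))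
      + (- gam)^2 * (norm (v - gs))^2"
    unfolding u_def by (rule norm_add_scaled_sq)
  finally show ?thesis by (simp add: e_def gs_def)
qed

text \<open>Second bound, from the variational inequality at x*, the descent lemma for f, and
  Young's inequality for the error v - f'(x).\<close>

lemma prox_step_dist_primal:
  fixes x v :: 'a
  defines "p \<equiv> prox h gam (x - gam *\<^sub>R v)"
  shows "(norm (p - xstar))^2 \<le> (norm (x - xstar))^2 + 2*gam*(hr xstar - hr p) + 2*gam*(favg x - favg p)
           - 2*gam*(v \<bullet> (x - xstar)) + 3/2*gam^2*(norm (v - gavg x))^2"
proof -
  define w where "w = x - gam *\<^sub>R v"
  define gx where "gx = gavg x"
  have "hr p + (w - p) \<bullet> (xstar - p) / gam \<le> hr xstar"
    using prox_gam_variational[OF opt_finite] by (simp add: p_def w_def)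
  then have vi: "(w - p) \<bullet> (xstar - p) \<le> gam * (hr xstar - hr p)"
    using gam_pos by (simp add: divide_le_eq field_simps)
  have wp: "(w - p) \<bullet> (xstar - p) = (x - p) \<bullet> (xstar - p) - gam * (v \<bullet> (xstar - p))"
    by (simp add: w_def inner_diff_left)
  have dist: "(norm (p - xstar))^2 = (norm (x - xstar))^2 - (norm (x - p))^2 + 2 * ((x - p) \<bullet> (xstar - p))"
    unfolding power2_norm_eq_inner
    by (simp add: inner_diff_left inner_diff_right inner_commute algebra_simps)
  have split: "v \<bullet> (xstar - p) = - (v \<bullet> (x - xstar)) + gx \<bullet> (x - p) + (v - gx) \<bullet> (x - p)"
    by (simp add: inner_diff_left inner_diff_right inner_commute algebra_simps)
  have young: "2 * gam * ((v - gx) \<bullet> (x - p)) \<le> 3/2 * gam^2 * (norm (v - gx))^2 + 2/3 * (norm (x - p))^2"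
    using young_inner[of "gam *\<^sub>R (v - gx)" "x - p"] gam_pos by (simp add: power_mult_distrib)
  have descent: "2 * gam * (gx \<bullet> (x - p)) \<le> 2 * gam * (favg x - favg p) + 1/3 * (norm (x - p))^2"
  proof -
    have "2 * gam * favg p \<le> 2 * gam * (favg x + gx \<bullet> (p - x) + L/2 * (norm (p - x))^2)"
      using favg_descent[of p x] gam_pos by (intro mult_left_mono) (auto simp: gx_def)
    moreover have "2 * gam * (L/2 * (norm (p - x))^2) = 1/3 * (norm (x - p))^2"
      using L_pos by (simp add: gam_def norm_minus_commute)
    moreover have "gx \<bullet> (x - p) = - (gx \<bullet> (p - x))" by (simp add: inner_diff_right)
    ultimately show ?thesis by (simp add: algebra_simps)
  qed
  have "(norm (p - xstar))^2 \<le> (norm (x - xstar))^2 - (norm (x - p))^2 + 2 * gam * (hr xstar - hr p)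
        + 2 * gam * (v \<bullet> (xstar - p))"
    using dist vi wp by (simp add: algebra_simps)
  also have "2 * gam * (v \<bullet> (xstar - p)) = - 2*gam*(v \<bullet> (x - xstar)) + 2 * gam * (gx \<bullet> (x - p))
      + 2 * gam * ((v - gx) \<bullet> (x - p))"
    unfolding split by (simp add: algebra_simps)
  finally show ?thesis using descent young by (simp add: gx_def)
qed

definition saga_dir :: "'a \<Rightarrow> (nat \<Rightarrow> 'a) \<Rightarrow> nat \<Rightarrow> 'a" where
  "saga_dir x \<phi> j = f' j x - f' j (\<phi> j) + (1 / real n) *\<^sub>R (\<Sum>i<n. f' i (\<phi> i))"

lemma saga_step_eq:
  "saga_step f' n gam h j (x, \<phi>) = (prox h gam (x - gam *\<^sub>R saga_dir x \<phi> j), \<phi>(j := x))"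
  by (simp add: saga_step_def saga_dir_def)

lemma saga_dir_unbiased: "(1 / real n) *\<^sub>R (\<Sum>j<n. saga_dir x \<phi> j) = gavg x"
proof -
  have "(\<Sum>j<n. saga_dir x \<phi> j)
      = (\<Sum>j<n. f' j x) - (\<Sum>j<n. f' j (\<phi> j)) + real n *\<^sub>R ((1 / real n) *\<^sub>R (\<Sum>i<n. f' i (\<phi> i)))"
    by (simp add: saga_dir_def sum.distrib sum_subtractf sum_constant_scaleR)
  also have "real n *\<^sub>R ((1 / real n) *\<^sub>R (\<Sum>i<n. f' i (\<phi> i))) = (\<Sum>i<n. f' i (\<phi> i))"
    using n_pos by simp
  finally show ?thesis by (simp add: gavg_def)
qed

lemma E_idx_inner_saga_dir:
  shows "E_idx (\<lambda>j. c \<bullet> saga_dir x \<phi> j) = c \<bullet> gavg x"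
    and "E_idx (\<lambda>j. saga_dir x \<phi> j \<bullet> c) = gavg x \<bullet> c"
  by (simp_all add: E_idx_inner saga_dir_unbiased inner_commute[of _ c])

lemma saga_dir_second_moments:
  fixes x :: 'a and \<phi> :: "nat \<Rightarrow> 'a"
  defines "GA \<equiv> E_idx (\<lambda>j. (norm (f' j x - f' j xstar))^2)"
    and "GB \<equiv> E_idx (\<lambda>j. (norm (f' j (\<phi> j) - f' j xstar))^2)"
  shows "E_idx (\<lambda>j. (norm (saga_dir x \<phi> j - gavg xstar))^2) \<le> 2 * GA + 2 * GB"
    and "E_idx (\<lambda>j. (norm (saga_dir x \<phi> j - gavg x))^2) \<le> 2 * GA + 2 * GB"
proof -
  define a where "a j = f' j x - f' j xstar" for j
  define b where "b j = f' j (\<phi> j) - f' j xstar" for j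
  have mean_b: "(1 / real n) *\<^sub>R (\<Sum>i<n. b i) = (1 / real n) *\<^sub>R (\<Sum>i<n. f' i (\<phi> i)) - gavg xstar"
    by (simp add: b_def gavg_def sum_subtractf scaleR_diff_right)
  have mean_ab: "(1 / real n) *\<^sub>R (\<Sum>i<n. a i - b i) = gavg x - (1 / real n) *\<^sub>R (\<Sum>i<n. f' i (\<phi> i))"
    by (simp add: a_def b_def gavg_def sum_subtractf scaleR_diff_right)
  have bounds: "E_idx (\<lambda>j. (norm (a j - (b j - (1 / real n) *\<^sub>R (\<Sum>i<n. b i))))^2) \<le> 2 * GA + 2 * GB"
      "E_idx (\<lambda>j. (norm ((a j - b j) - (1 / real n) *\<^sub>R (\<Sum>i<n. a i - b i)))^2) \<le> 2 * GA + 2 * GB"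
    using mult_left_mono[OF sum_sq_saga_direction_le[OF n_pos, of a b], of "1 / real n"]
      mult_left_mono[OF sum_sq_saga_deviation_le[OF n_pos, of a b], of "1 / real n"]
    by (simp_all add: E_idx_def GA_def GB_def a_def b_def algebra_simps)
  show "E_idx (\<lambda>j. (norm (saga_dir x \<phi> j - gavg xstar))^2) \<le> 2 * GA + 2 * GB"
    using bounds(1) unfolding mean_b by (simp add: saga_dir_def a_def b_def algebra_simps)
  show "E_idx (\<lambda>j. (norm (saga_dir x \<phi> j - gavg x))^2) \<le> 2 * GA + 2 * GB"
    using bounds(2) unfolding mean_ab by (simp add: saga_dir_def a_def b_def algebra_simps)
qed

definition breg :: "nat \<Rightarrow> 'a \<Rightarrow> real" where
  "breg i y = fs i y - fs i xstar - f' i xstar \<bullet> (y - xstar)"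

definition Psi :: "(nat \<Rightarrow> 'a) \<Rightarrow> real" where "Psi \<phi> = E_idx (\<lambda>i. breg i (\<phi> i))"

definition potential :: "'a \<times> (nat \<Rightarrow> 'a) \<Rightarrow> real" where
  "potential s = (norm (fst s - xstar))^2 + 3/2 * gam * real n * Psi (snd s)"

lemma Psi_nonneg: "0 \<le> Psi \<phi>"
  unfolding Psi_def breg_def
  by (intro E_idx_nonneg) (use convex_tangent_below[OF conv smooth] in \<open>simp add: algebra_simps\<close>)

lemma potential_nonneg: "0 \<le> potential s"
  unfolding potential_def using Psi_nonneg gam_pos by (intro add_nonneg_nonneg mult_nonneg_nonneg) auto

lemma Psi_const: "Psi (\<lambda>_. y) = favg y - favg xstar - gavg xstar \<bullet> (y - xstar)"
  by (simp add: Psi_def breg_def favg_def gavg_inner)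

lemma Psi_update:
  "real n * E_idx (\<lambda>j. Psi (\<phi>(j := x))) = (real n - 1) * Psi \<phi> + Psi (\<lambda>_. x)"
proof -
  define S where "S = (\<Sum>i<n. breg i (\<phi> i))"
  have upd: "(\<Sum>i<n. breg i (if i = j then x else \<phi> i)) = S + (breg j x - breg j (\<phi> j))"
    if "j < n" for j
  proof -
    have "(\<Sum>i<n. breg i (if i = j then x else \<phi> i)) = (\<Sum>i<n. breg i (\<phi> i) + (if i = j then breg j x - breg j (\<phi> j) else 0))"
      by (rule sum.cong) auto
    also have "\<dots> = S + (breg j x - breg j (\<phi> j))" using that by (simp add: sum.distrib S_def)
    finally show ?thesis .
  qed
  have "(\<Sum>j<n. Psi (\<phi>(j := x))) = (\<Sum>j<n. (1 / real n) * (S + (breg j x - breg j (\<phi> j))))"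
    unfolding Psi_def E_idx_def by (rule sum.cong) (auto simp: upd)
  also have "\<dots> = (1 / real n) * (\<Sum>j<n. S + (breg j x - breg j (\<phi> j)))"
    by (simp only: sum_distrib_left)
  also have "\<dots> = (1 / real n) * (real n * S + (\<Sum>j<n. breg j x) - S)"
    by (simp add: sum.distrib sum_subtractf S_def)
  finally have sum_eq: "(\<Sum>j<n. Psi (\<phi>(j := x))) = (1 / real n) * (real n * S + (\<Sum>j<n. breg j x) - S)" .
  have "real n * E_idx (\<lambda>j. Psi (\<phi>(j := x))) = (\<Sum>j<n. Psi (\<phi>(j := x)))"
    using n_pos by (simp add: E_idx_def)
  also have "\<dots> = (real n - 1) * Psi \<phi> + Psi (\<lambda>_. x)"
    unfolding sum_eq using n_pos by (simp add: Psi_def E_idx_def S_def field_simps)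
  finally show ?thesis .
qed

lemma grad_gap_bounds:
  shows "E_idx (\<lambda>j. (norm (f' j x - f' j xstar))^2) \<le> 2 * L * (favg xstar - favg x + gavg x \<bullet> (x - xstar))"
    and "E_idx (\<lambda>j. (norm (f' j (\<phi> j) - f' j xstar))^2) \<le> 2 * L * Psi \<phi>"
proof -
  have "E_idx (\<lambda>j. (norm (f' j x - f' j xstar))^2)
        \<le> E_idx (\<lambda>j. 2 * L * (fs j xstar - fs j x - f' j x \<bullet> (xstar - x)))"
    using grad_diff_sq_le[of _ xstar x] by (intro E_idx_mono) (simp add: norm_minus_commute)
  then show "E_idx (\<lambda>j. (norm (f' j x - f' j xstar))^2) \<le> 2 * L * (favg xstar - favg x + gavg x \<bullet> (x - xstar))"
    by (simp add: favg_def gavg_inner inner_diff_right algebra_simps)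
  have "E_idx (\<lambda>j. (norm (f' j (\<phi> j) - f' j xstar))^2) \<le> E_idx (\<lambda>j. 2 * L * breg j (\<phi> j))"
    using grad_diff_sq_le by (intro E_idx_mono) (simp add: breg_def)
  then show "E_idx (\<lambda>j. (norm (f' j (\<phi> j) - f' j xstar))^2) \<le> 2 * L * Psi \<phi>"
    by (simp add: Psi_def)
qed

lemma expected_step_dist:
  fixes x :: 'a and \<phi> :: "nat \<Rightarrow> 'a"
  defines "p \<equiv> \<lambda>j. prox h gam (x - gam *\<^sub>R saga_dir x \<phi> j)"
  shows "E_idx (\<lambda>j. (norm (p j - xstar))^2) \<le> (norm (x - xstar))^2
           - 2 * gam * (gavg x \<bullet> (x - xstar) - gavg xstar \<bullet> (x - xstar))
           + gam^2 * E_idx (\<lambda>j. (norm (saga_dir x \<phi> j - gavg xstar))^2)"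
    and "E_idx (\<lambda>j. (norm (p j - xstar))^2) \<le> (norm (x - xstar))^2
           + 2 * gam * (hr xstar - E_idx (\<lambda>j. hr (p j))) + 2 * gam * (favg x - E_idx (\<lambda>j. favg (p j)))
           - 2 * gam * (gavg x \<bullet> (x - xstar)) + 3/2 * gam^2 * E_idx (\<lambda>j. (norm (saga_dir x \<phi> j - gavg x))^2)"
proof -
  have "E_idx (\<lambda>j. (norm (p j - xstar))^2) \<le> E_idx (\<lambda>j. (norm (x - xstar))^2
      - 2 * gam * ((x - xstar) \<bullet> (saga_dir x \<phi> j - gavg xstar)) + gam^2 * (norm (saga_dir x \<phi> j - gavg xstar))^2)"
    unfolding p_def by (intro E_idx_mono prox_step_dist_dual)
  then show "E_idx (\<lambda>j. (norm (p j - xstar))^2) \<le> (norm (x - xstar))^2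
      - 2 * gam * (gavg x \<bullet> (x - xstar) - gavg xstar \<bullet> (x - xstar))
      + gam^2 * E_idx (\<lambda>j. (norm (saga_dir x \<phi> j - gavg xstar))^2)"
    by (simp add: inner_diff_right E_idx_inner_saga_dir inner_commute)
  have "E_idx (\<lambda>j. (norm (p j - xstar))^2) \<le> E_idx (\<lambda>j. (norm (x - xstar))^2 + 2*gam*(hr xstar - hr (p j))
      + 2*gam*(favg x - favg (p j)) - 2*gam*(saga_dir x \<phi> j \<bullet> (x - xstar))
      + 3/2*gam^2*(norm (saga_dir x \<phi> j - gavg x))^2)"
    unfolding p_def by (intro E_idx_mono prox_step_dist_primal)
  then show "E_idx (\<lambda>j. (norm (p j - xstar))^2) \<le> (norm (x - xstar))^2
      + 2 * gam * (hr xstar - E_idx (\<lambda>j. hr (p j))) + 2 * gam * (favg x - E_idx (\<lambda>j. favg (p j)))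
      - 2 * gam * (gavg x \<bullet> (x - xstar)) + 3/2 * gam^2 * E_idx (\<lambda>j. (norm (saga_dir x \<phi> j - gavg x))^2)"
    by (simp add: E_idx_inner_saga_dir)
qed

lemma one_step_decrease:
  "E_idx (\<lambda>j. potential (saga_step f' n gam h j s)
                + gam/2 * (Fval (fst (saga_step f' n gam h j s)) - Fval xstar)) \<le> potential s"
proof -
  obtain x \<phi> where s: "s = (x, \<phi>)" by (cases s)
  define v where "v = saga_dir x \<phi>"
  define p where "p j = prox h gam (x - gam *\<^sub>R v j)" for j
  define R2 where "R2 = (norm (x - xstar))^2"
  define Ix where "Ix = gavg x \<bullet> (x - xstar)"
  define gd where "gd = gavg xstar \<bullet> (x - xstar)"
  have step_eq: "saga_step f' n gam h j s = (p j, \<phi>(j := x))" for j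
    by (simp add: s saga_step_eq p_def v_def)
  have A: "E_idx (\<lambda>j. (norm (p j - xstar))^2)
      \<le> R2 - 2 * gam * (Ix - gd) + gam^2 * E_idx (\<lambda>j. (norm (v j - gavg xstar))^2)"
    using expected_step_dist(1)[of x \<phi>] by (simp add: p_def v_def R2_def Ix_def gd_def)
  have B: "E_idx (\<lambda>j. (norm (p j - xstar))^2) \<le> R2 + 2 * gam * (hr xstar - E_idx (\<lambda>j. hr (p j)))
      + 2 * gam * (favg x - E_idx (\<lambda>j. favg (p j))) - 2 * gam * Ix
      + 3/2 * gam^2 * E_idx (\<lambda>j. (norm (v j - gavg x))^2)"
    using expected_step_dist(2)[of x \<phi>] by (simp add: p_def v_def R2_def Ix_def)
  note moments = saga_dir_second_moments[of x \<phi>, folded v_def]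
  note gaps = grad_gap_bounds(1)[of x, folded Ix_def] grad_gap_bounds(2)[of \<phi>]
  have combined: "E_idx (\<lambda>j. (norm (p j - xstar))^2) - 3/2 * gam * Psi \<phi>
      + 3/2 * gam * (favg x - favg xstar - gd)
      + gam/2 * (E_idx (\<lambda>j. favg (p j)) + E_idx (\<lambda>j. hr (p j)) - favg xstar - hr xstar) \<le> R2"
    by (rule saga_step_arithmetic[OF gam_def L_pos A B moments gaps])
      (auto intro: E_idx_nonneg)
  have upd: "real n * E_idx (\<lambda>j. Psi (\<phi>(j := x))) = (real n - 1) * Psi \<phi> + (favg x - favg xstar - gd)"
    by (simp add: Psi_update Psi_const gd_def)
  have "E_idx (\<lambda>j. potential (saga_step f' n gam h j s) + gam/2 * (Fval (fst (saga_step f' n gam h j s)) - Fval xstar))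
      = E_idx (\<lambda>j. (norm (p j - xstar))^2) + 3/2 * gam * (real n * E_idx (\<lambda>j. Psi (\<phi>(j := x))))
        + gam/2 * (E_idx (\<lambda>j. favg (p j)) + E_idx (\<lambda>j. hr (p j)) - favg xstar - hr xstar)"
    by (simp add: step_eq potential_def Fval_def algebra_simps)
  also have "\<dots> = (E_idx (\<lambda>j. (norm (p j - xstar))^2) - 3/2 * gam * Psi \<phi> + 3/2 * gam * (favg x - favg xstar - gd)
      + gam/2 * (E_idx (\<lambda>j. favg (p j)) + E_idx (\<lambda>j. hr (p j)) - favg xstar - hr xstar)) + 3/2 * gam * real n * Psi \<phi>"
    unfolding upd by (simp add: algebra_simps)
  also have "\<dots> \<le> potential s"
    using combined by (simp add: potential_def s R2_def)
  finally show ?thesis .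
qed

end

section \<open>Unrolling the recursion over all index sequences\<close>

lemma index_seqs_card: "card (index_seqs n k) = n ^ k"
  unfolding index_seqs_def using card_lists_length_eq[of "{..<n}" k] by (simp add: conj_commute)

text \<open>Summing over sequences of length k+1 is summing over a sequence of length k and
  a last index: the uniform distribution on index sequences is a product.\<close>

lemma sum_index_seqs_Suc:
  "(\<Sum>js\<in>index_seqs n (Suc k). g js) = (\<Sum>js\<in>index_seqs n k. \<Sum>j<n. g (js @ [j]))"
proof -
  have split: "index_seqs n (Suc k) = (\<lambda>(js, j). js @ [j]) ` (index_seqs n k \<times> {..<n})"
  proof
    show "index_seqs n (Suc k) \<subseteq> (\<lambda>(js, j). js @ [j]) ` (index_seqs n k \<times> {..<n})"
    proof
      fix xs assume "xs \<in> index_seqs n (Suc k)"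
      then have xs: "length xs = Suc k" "set xs \<subseteq> {..<n}" by (auto simp: index_seqs_def)
      then obtain y ys where "xs = ys @ [y]" "length ys = k" by (metis length_Suc_conv_rev)
      with xs show "xs \<in> (\<lambda>(js, j). js @ [j]) ` (index_seqs n k \<times> {..<n})"
        by (auto simp: index_seqs_def image_iff)
    qed
  qed (auto simp: index_seqs_def)
  have inj: "inj_on (\<lambda>(js, j). js @ [j]) (index_seqs n k \<times> {..<n})"
    by (auto simp: inj_on_def)
  show ?thesis
    unfolding split sum.reindex[OF inj] sum.cartesian_product by (simp add: case_prod_beta)
qed

lemma saga_run_snoc:
  "saga_run f' n \<gamma> h x0 (js @ [j]) = saga_step f' n \<gamma> h j (saga_run f' n \<gamma> h x0 js)"
  by (simp add: saga_run_def)

lemma saga_iter_snoc: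
  shows "t \<le> length js \<Longrightarrow> saga_iter f' n \<gamma> h x0 (js @ [j]) t = saga_iter f' n \<gamma> h x0 js t"
    and "saga_iter f' n \<gamma> h x0 (js @ [j]) (Suc (length js))
           = fst (saga_step f' n \<gamma> h j (saga_run f' n \<gamma> h x0 js))"
  by (simp_all add: saga_iter_def saga_run_snoc)

context saga_setting
begin

lemma iterate_finite:
  assumes "1 \<le> t" "t \<le> length js"
  shows "h (saga_iter f' n gam h x0 js t) \<noteq> \<infinity>"
proof -
  obtain i where i: "t = Suc i" "i < length js" using assms by (cases t) auto
  then have "take t js = take i js @ [js ! i]" by (simp add: take_Suc_conv_app_nth)
  then show ?thesis
    by (simp add: saga_iter_def saga_run_snoc saga_step_def Let_def prox_gam_finite)
qed

text \<open>Sum over all index sequences of length k of the final potential plus gam/2 times the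
  accumulated optimality gaps; n^-k times this is the corresponding expectation.\<close>

definition acc_potential :: "'a \<Rightarrow> nat \<Rightarrow> real" where
  "acc_potential x0 k = (\<Sum>js\<in>index_seqs n k. potential (saga_run f' n gam h x0 js)
     + gam/2 * (\<Sum>t\<in>{1..k}. Fval (saga_iter f' n gam h x0 js t) - Fval xstar))"

lemma acc_potential_bound: "acc_potential x0 k \<le> real n ^ k * potential (x0, \<lambda>_. x0)"
proof (induction k)
  case 0
  have "index_seqs n 0 = {[]}" by (auto simp: index_seqs_def)
  then show ?case by (simp add: acc_potential_def saga_run_def)
next
  case (Suc k)
  define run where "run js = saga_run f' n gam h x0 js" for js
  define A where "A js = (\<Sum>t\<in>{1..k}. Fval (saga_iter f' n gam h x0 js t) - Fval xstar)" for js
  define next_val where "next_val js j = potential (saga_step f' n gam h j (run js))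
    + gam/2 * (Fval (fst (saga_step f' n gam h j (run js))) - Fval xstar)" for js j
  have "acc_potential x0 (Suc k) = (\<Sum>js\<in>index_seqs n k. \<Sum>j<n. next_val js j + gam/2 * A js)"
    unfolding acc_potential_def sum_index_seqs_Suc
  proof (intro sum.cong refl)
    fix js j assume "js \<in> index_seqs n k"
    then have lj: "length js = k" by (simp add: index_seqs_def)
    have "(\<Sum>t\<in>{1..k}. Fval (saga_iter f' n gam h x0 (js @ [j]) t) - Fval xstar) = A js"
      unfolding A_def by (rule sum.cong) (auto simp: saga_iter_snoc(1) lj)
    then show "potential (saga_run f' n gam h x0 (js @ [j]))
        + gam / 2 * (\<Sum>t\<in>{1..Suc k}. Fval (saga_iter f' n gam h x0 (js @ [j]) t) - Fval xstar)
      = next_val js j + gam/2 * A js"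
      using saga_iter_snoc(2)[of f' n gam h x0 js j]
      by (simp add: lj next_val_def run_def saga_run_snoc algebra_simps)
  qed
  also have "\<dots> \<le> (\<Sum>js\<in>index_seqs n k. real n * (potential (run js) + gam/2 * A js))"
  proof (rule sum_mono)
    fix js
    have "(\<Sum>j<n. next_val js j) = real n * E_idx (next_val js)"
      using n_pos by (simp add: E_idx_def)
    also have "\<dots> \<le> real n * potential (run js)"
      unfolding next_val_def by (intro mult_left_mono one_step_decrease) simp
    finally show "(\<Sum>j<n. next_val js j + gam/2 * A js) \<le> real n * (potential (run js) + gam/2 * A js)"
      by (simp add: sum.distrib distrib_left)
  qed
  also have "\<dots> = real n * acc_potential x0 k"
    by (simp add: acc_potential_def sum_distrib_left A_def run_def)
  also have "\<dots> \<le> real n * (real n ^ k * potential (x0, \<lambda>_. x0))"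
    using Suc.IH by (intro mult_left_mono) auto
  finally show ?case by simp
qed

lemma avg_iterate_bound:
  assumes k: "k \<ge> 1" and lj: "length js = k"
  shows "h (saga_avg f' n gam h x0 js k) \<noteq> \<infinity>"
    and "Fval (saga_avg f' n gam h x0 js k) \<le> (1 / real k) * (\<Sum>t\<in>{1..k}. Fval (saga_iter f' n gam h x0 js t))"
proof -
  define X where "X t = saga_iter f' n gam h x0 js t" for t
  define c where "c = 1 / real k"
  have avg: "saga_avg f' n gam h x0 js k = (\<Sum>t\<in>{1..k}. c *\<^sub>R X t)"
    by (simp add: saga_avg_def scaleR_sum_right X_def c_def)
  have c1: "(\<Sum>t\<in>{1..k}. c) = 1" and c0: "c \<ge> 0" using k by (simp_all add: c_def)
  have Xf: "h (X t) \<noteq> \<infinity>" if "t \<in> {1..k}" for t using iterate_finite[of t js] lj that by (simp add: X_def)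
  have "(\<Sum>t\<in>{1..k}. c *\<^sub>R (X t, hr (X t))) \<in> epigraph h"
    by (rule convex_sum[OF _ convex[unfolded convex_fun_def]])
       (use c1 c0 Xf finite_eq in \<open>auto simp: epigraph_def\<close>)
  moreover have "(\<Sum>t\<in>{1..k}. c *\<^sub>R (X t, hr (X t))) = ((\<Sum>t\<in>{1..k}. c *\<^sub>R X t), (\<Sum>t\<in>{1..k}. c * hr (X t)))"
    by (simp add: prod_eq_iff fst_sum snd_sum)
  ultimately have h_le: "h (saga_avg f' n gam h x0 js k) \<le> ereal (\<Sum>t\<in>{1..k}. c * hr (X t))"
    by (simp add: epigraph_def avg)
  then show hf: "h (saga_avg f' n gam h x0 js k) \<noteq> \<infinity>" by auto
  have hr_le: "hr (saga_avg f' n gam h x0 js k) \<le> (\<Sum>t\<in>{1..k}. c * hr (X t))"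
    using h_le finite_eq[OF hf] by simp
  have "fs i (saga_avg f' n gam h x0 js k) \<le> (\<Sum>t\<in>{1..k}. c * fs i (X t))" if "i < n" for i
    unfolding avg using k c0 by (intro convex_on_sum[OF _ _ conv[OF that] c1]) auto
  then have "favg (saga_avg f' n gam h x0 js k) \<le> E_idx (\<lambda>i. \<Sum>t\<in>{1..k}. c * fs i (X t))"
    unfolding favg_def by (rule E_idx_mono)
  also have "\<dots> = (\<Sum>t\<in>{1..k}. c * favg (X t))"
    by (simp add: favg_def E_idx_def sum_distrib_left sum.swap[of _ "{..<n}"] mult_ac)
  finally show "Fval (saga_avg f' n gam h x0 js k) \<le> (1 / real k) * (\<Sum>t\<in>{1..k}. Fval (saga_iter f' n gam h x0 js t))"
    using hr_le by (simp add: Fval_def c_def X_def sum_distrib_left sum.distrib distrib_left)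
qed

section \<open>The convergence rate\<close>

lemma expected_gap_real:
  assumes k: "k \<ge> 1"
  shows "(1 / real n ^ k) * (\<Sum>js\<in>index_seqs n k. Fval (saga_avg f' n gam h x0 js k)) - Fval xstar
           \<le> 2 * potential (x0, \<lambda>_. x0) / (gam * real k)"
proof -
  define NK where "NK = real n ^ k"
  define T0 where "T0 = potential (x0, \<lambda>_. x0)"
  define A where "A js = (\<Sum>t\<in>{1..k}. Fval (saga_iter f' n gam h x0 js t) - Fval xstar)" for js
  have NKp: "NK > 0" using n_pos by (simp add: NK_def)
  have kp: "real k > 0" using k by simp
  have jensen: "Fval (saga_avg f' n gam h x0 js k) - Fval xstar \<le> A js / real k"
    if "js \<in> index_seqs n k" for js
    using avg_iterate_bound(2)[OF k, of js x0] that kp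
    by (simp add: A_def index_seqs_def sum_subtractf field_simps)
  have "gam/2 * (\<Sum>js\<in>index_seqs n k. A js)
      \<le> (\<Sum>js\<in>index_seqs n k. potential (saga_run f' n gam h x0 js) + gam/2 * A js)"
    by (simp add: sum_distrib_left sum_mono potential_nonneg)
  also have "\<dots> \<le> NK * T0"
    using acc_potential_bound[of x0 k] by (simp add: acc_potential_def A_def NK_def T0_def)
  finally have acc: "(\<Sum>js\<in>index_seqs n k. A js) \<le> 2 * NK * T0 / gam"
    using gam_pos by (simp add: field_simps)
  have "(1 / NK) * (\<Sum>js\<in>index_seqs n k. Fval (saga_avg f' n gam h x0 js k)) - Fval xstar
      = (1 / NK) * (\<Sum>js\<in>index_seqs n k. Fval (saga_avg f' n gam h x0 js k) - Fval xstar)"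
    using NKp by (simp add: sum_subtractf index_seqs_card NK_def field_simps)
  also have "\<dots> \<le> (1 / NK) * ((\<Sum>js\<in>index_seqs n k. A js) / real k)"
    using jensen NKp by (intro mult_left_mono) (auto simp: sum_divide_distrib intro: sum_mono)
  also have "\<dots> \<le> (1 / NK) * (2 * NK * T0 / gam / real k)"
    using acc NKp kp by (intro mult_left_mono divide_right_mono) auto
  also have "\<dots> = 2 * T0 / (gam * real k)" using NKp by simp
  finally show ?thesis by (simp add: NK_def T0_def)
qed

lemma initial_potential_bound:
  assumes k: "k \<ge> 1"
  shows "2 * potential (x0, \<lambda>_. x0) / (gam * real k)
    \<le> 4 * real n / real k * (2 * L / real n * (norm (x0 - xstar))^2 + favg x0 - gavg xstar \<bullet> (x0 - xstar) - favg xstar)"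
proof -
  define D where "D = favg x0 - favg xstar - gavg xstar \<bullet> (x0 - xstar)"
  have D0: "D \<ge> 0" using Psi_nonneg[of "\<lambda>_. x0"] by (simp add: Psi_const D_def)
  have np: "real n > 0" and kp: "real k > 0" using n_pos k by simp_all
  have "2 * potential (x0, \<lambda>_. x0) / (gam * real k) = (6 * L * (norm (x0 - xstar))^2 + 3 * real n * D) / real k"
    using L_pos kp by (simp add: potential_def Psi_const gam_def D_def field_simps)
  also have "\<dots> \<le> (8 * L * (norm (x0 - xstar))^2 + 4 * real n * D) / real k"
    using L_pos D0 np kp by (intro divide_right_mono add_mono mult_right_mono) auto
  also have "\<dots> = 4 * real n / real k * (2 * L / real n * (norm (x0 - xstar))^2 + favg x0 - gavg xstar \<bullet> (x0 - xstar) - favg xstar)"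
    using np kp by (simp add: D_def field_simps)
  finally show ?thesis .
qed

text \<open>The rate in the extended-real form of the theorem: on the relevant points h is finite.\<close>

lemma expected_gap_bound:
  assumes k: "k \<ge> 1"
  shows "ereal (1 / real n ^ k) * (\<Sum>js\<in>index_seqs n k. ereal (favg (saga_avg f' n gam h x0 js k)) + h (saga_avg f' n gam h x0 js k))
      - (ereal (favg xstar) + h xstar)
   \<le> ereal (4 * real n / real k * (2 * L / real n * (norm (x0 - xstar))^2 + favg x0 - gavg xstar \<bullet> (x0 - xstar) - favg xstar))"
proof -
  have "ereal (favg (saga_avg f' n gam h x0 js k)) + h (saga_avg f' n gam h x0 js k)
      = ereal (Fval (saga_avg f' n gam h x0 js k))" if "js \<in> index_seqs n k" for js
    using finite_eq[OF avg_iterate_bound(1)[OF k, of js x0]] that by (simp add: Fval_def index_seqs_def)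
  moreover have "ereal (favg xstar) + h xstar = ereal (Fval xstar)"
    using finite_eq[OF opt_finite] by (simp add: Fval_def)
  ultimately show ?thesis
    using order_trans[OF expected_gap_real[OF k] initial_potential_bound[OF k]]
    by (simp add: sum.cong[OF refl, of _ "\<lambda>js. ereal (Fval (saga_avg f' n gam h x0 js k))"])
qed

end

theorem theorem2:
  fixes fs :: "nat \<Rightarrow> 'a::euclidean_space \<Rightarrow> real"
    and f' :: "nat \<Rightarrow> 'a \<Rightarrow> 'a"
    and h :: "'a \<Rightarrow> ereal"
    and n k :: nat and L :: real and x0 xstar :: 'a
  assumes n_pos: "n \<ge> 1"
    and L_pos: "L > 0"
    and conv: "\<And>i. i < n \<Longrightarrow> convex_on UNIV (fs i)"
    and grad: "\<And>i x. i < n \<Longrightarrow> (fs i has_derivative (\<lambda>v. f' i x \<bullet> v)) (at x)"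
    and lip: "\<And>i x y. i < n \<Longrightarrow> norm (f' i x - f' i y) \<le> L * norm (x - y)"
    and h_proper: "proper_fun h" and h_closed: "closed_fun h" and h_convex: "convex_fun h"
    and min: "\<And>x. ereal ((1 / real n) * (\<Sum>i<n. fs i xstar)) + h xstar
                 \<le> ereal ((1 / real n) * (\<Sum>i<n. fs i x)) + h x"
    and k_pos: "k \<ge> 1"
  shows
    "(let f = (\<lambda>x. (1 / real n) * (\<Sum>i<n. fs i x));
          fgrad = (\<lambda>x. (1 / real n) *\<^sub>R (\<Sum>i<n. f' i x));
          F = (\<lambda>x. ereal (f x) + h x);
          \<gamma> = 1 / (3 * L)
      in ereal (1 / real n ^ k) * (\<Sum>js\<in>index_seqs n k. F (saga_avg f' n \<gamma> h x0 js k)) - F xstar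
         \<le> ereal (4 * real n / real k *
              (2 * L / real n * (norm (x0 - xstar))\<^sup>2 + f x0 - fgrad xstar \<bullet> (x0 - xstar) - f xstar)))"
proof -
  interpret saga_setting h fs f' n L xstar
    by unfold_locales (use assms in auto)
  show ?thesis
    using expected_gap_bound[OF k_pos, of x0]
    unfolding Let_def favg_def gavg_def gam_def E_idx_def .
qed

end
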